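(* Let $A$ be an $n\times(n+1)$ matrix over a commutative ring with columns $A_1,\dots,A_{n+1}$. For $1\le l\le n+1$ let $A^{(l)}$ be the $n\times n$ matrix obtained from $A$ by deleting the column $A_l$. For a subset $I\subset\{1,\dots,n\}$ let $A(I)$ be the $n\times n$ matrix whose $i$-th row equals the $i$-th row of $A^{(n+1)}$ if $i\in I$ and the $i$-th row of $A^{(1)}$ if $i\notin I$. Then for every $1\le l\le n+1$, $$\det A^{(l)}=\sum_{I\subset\{1,\dots,n\},\ |I|=l-1}\det A(I).$$ *)

theory Defs
  imports "Jordan_Normal_Form.Determinant"
begin

text \<open>Indices are 0-based (Jordan_Normal_Form convention). For a matrix A with
  n rows and n+1 columns, columns are A_1..A_{n+1} in the paper, i.e. 0..n here.\<close>

text \<open>del_col A l: the n x n matrix obtained from A by deleting the l-th column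
  (paper's 1-based index l, so 0-based column l-1 is removed).\<close>
definition del_col :: "'a mat \<Rightarrow> nat \<Rightarrow> 'a mat" where
  "del_col A l = mat (dim_row A) (dim_col A - 1)
     (\<lambda>(i, j). A $$ (i, if j < l - 1 then j else j + 1))"

definition mixed_mat :: "'a mat \<Rightarrow> nat set \<Rightarrow> 'a mat" where
  "mixed_mat A I = mat (dim_row A) (dim_col A - 1)
     (\<lambda>(i, j). if i \<in> I then del_col A (dim_col A) $$ (i, j) else del_col A 1 $$ (i, j))"

end

theory Submission
  imports Defs
begin

text \<open>Expand the determinants by the Leibniz formula (indices 0-based). In the
  term of det A(I) for a permutation p, row i takes column p i of A if i \<in> I and
  column p i + 1 otherwise. With Z = p ` I this is the term for p of the matrix whose
  j-th column is column j of A if j \<in> Z and column j + 1 otherwise; as I \<mapsto> p ` I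
  permutes the subsets of size l - 1, the sum over I becomes the sum of these
  determinants over all Z of size l - 1. Unless Z is an initial segment, some j \<notin> Z
  has j + 1 \<in> Z, and then columns j and j + 1 of that matrix coincide. For
  Z = {0..<l - 1} the matrix is A^(l).\<close>

definition row_shift_mat :: "'a mat \<Rightarrow> nat \<Rightarrow> nat set \<Rightarrow> 'a mat" where
  "row_shift_mat A n I = mat n n (\<lambda>(i, j). A $$ (i, if i \<in> I then j else j + 1))"

definition col_shift_mat :: "'a mat \<Rightarrow> nat \<Rightarrow> nat set \<Rightarrow> 'a mat" where
  "col_shift_mat A n Z = mat n n (\<lambda>(i, j). A $$ (i, if j \<in> Z then j else j + 1))"

lemma down_closed_eq_initial_segment:
  fixes Z :: "nat set"
  assumes fin: "finite Z" and down: "\<And>j. Suc j \<in> Z \<Longrightarrow> j \<in> Z"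
  shows "Z = {0..<card Z}"
proof -
  have below: "j \<in> Z" if "j \<le> k" "k \<in> Z" for j k
    using that by (induction rule: inc_induct) (simp_all add: down)
  have "Z \<subseteq> {0..<card Z}"
  proof
    fix k assume "k \<in> Z"
    then have "{0..k} \<subseteq> Z" using below by auto
    then have "card {0..k} \<le> card Z" using fin by (rule card_mono[rotated])
    then show "k \<in> {0..<card Z}" by simp
  qed
  then show ?thesis using fin by (simp add: card_subset_eq)
qed

lemma det_mat_leibniz:
  "det (mat n n f) = (\<Sum>p \<in> {p. p permutes {0..<n}}. signof p * (\<Prod>i = 0..<n. f (i, p i)))"
proof -
  have "det (mat n n f)
      = (\<Sum>p \<in> {p. p permutes {0..<n}}. signof p * (\<Prod>i = 0..<n. mat n n f $$ (i, p i)))"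
    by (rule det_def') simp
  also have "\<dots> = (\<Sum>p \<in> {p. p permutes {0..<n}}. signof p * (\<Prod>i = 0..<n. f (i, p i)))"
    by (intro sum.cong refl arg_cong[where f = "\<lambda>x. signof _ * x"] prod.cong)
      (auto simp: permutes_in_image)
  finally show ?thesis .
qed

lemma bij_betw_image_subsets_of_card:
  assumes "p permutes U"
  shows "bij_betw (image p) {I. I \<subseteq> U \<and> card I = k} {I. I \<subseteq> U \<and> card I = k}"
proof (rule bij_betw_byWitness[where f' = "image (inv_into UNIV p)"])
  have perm_inv: "inv_into UNIV p permutes U"
    using assms by (rule permutes_inv)
  have inj: "inj p" "inj (inv_into UNIV p)"
    using permutes_inj[OF assms] permutes_inj[OF perm_inv] by simp_all
  show "\<forall>I \<in> {I. I \<subseteq> U \<and> card I = k}. inv_into UNIV p ` p ` I = I"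
    using inj(1) by (simp add: image_image)
  show "\<forall>Z \<in> {I. I \<subseteq> U \<and> card I = k}. p ` inv_into UNIV p ` Z = Z"
    using assms by (simp add: image_image permutes_inverses(1))
  show "image p ` {I. I \<subseteq> U \<and> card I = k} \<subseteq> {I. I \<subseteq> U \<and> card I = k}"
    using assms inj(1) by (auto simp: permutes_in_image card_image inj_on_subset)
  show "image (inv_into UNIV p) ` {I. I \<subseteq> U \<and> card I = k} \<subseteq> {I. I \<subseteq> U \<and> card I = k}"
    using perm_inv inj(2) by (auto simp: permutes_in_image card_image inj_on_subset)
qed

lemma sum_det_row_shift_eq_sum_det_col_shift:
  fixes A :: "'a :: comm_ring_1 mat" and n k :: nat
  defines "S \<equiv> {I. I \<subseteq> {0..<n} \<and> card I = k}"
  shows "(\<Sum>I \<in> S. det (row_shift_mat A n I)) = (\<Sum>Z \<in> S. det (col_shift_mat A n Z))"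
proof -
  let ?P = "{p. p permutes {0..<n}}"
  let ?term = "\<lambda>p Z. signof p * (\<Prod>i = 0..<n. A $$ (i, if p i \<in> Z then p i else p i + 1))"
  let ?row_term = "\<lambda>p I. signof p * (\<Prod>i = 0..<n. A $$ (i, if i \<in> I then p i else p i + 1))"
  have reindex: "(\<Sum>I \<in> S. ?row_term p I) = (\<Sum>Z \<in> S. ?term p Z)" if "p \<in> ?P" for p
  proof -
    have "inj p" using that permutes_inj by blast
    have "bij_betw (image p) S S"
      unfolding S_def using that by (intro bij_betw_image_subsets_of_card) simp
    then have "(\<Sum>Z \<in> S. ?term p Z) = (\<Sum>I \<in> S. ?term p (p ` I))"
      by (rule sum.reindex_bij_betw[symmetric])
    then show ?thesis using \<open>inj p\<close> by (simp add: inj_image_mem_iff)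
  qed
  have "(\<Sum>I \<in> S. det (row_shift_mat A n I)) = (\<Sum>I \<in> S. \<Sum>p \<in> ?P. ?row_term p I)"
    by (simp add: row_shift_mat_def det_mat_leibniz)
  also have "\<dots> = (\<Sum>p \<in> ?P. \<Sum>I \<in> S. ?row_term p I)"
    by (rule sum.swap)
  also have "\<dots> = (\<Sum>p \<in> ?P. \<Sum>Z \<in> S. ?term p Z)"
    using reindex by (rule sum.cong[OF refl])
  also have "\<dots> = (\<Sum>Z \<in> S. \<Sum>p \<in> ?P. ?term p Z)"
    by (rule sum.swap)
  also have "\<dots> = (\<Sum>Z \<in> S. det (col_shift_mat A n Z))"
    by (simp add: col_shift_mat_def det_mat_leibniz)
  finally show ?thesis .
qed

lemma det_col_shift_non_initial:
  fixes A :: "'a :: comm_ring_1 mat"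
  assumes Z: "Z \<subseteq> {0..<n}" and non_initial: "Z \<noteq> {0..<card Z}"
  shows "det (col_shift_mat A n Z) = 0"
proof -
  obtain j where j: "Suc j \<in> Z" "j \<notin> Z"
    using down_closed_eq_initial_segment[of Z] non_initial Z finite_subset by blast
  then have "Suc j < n" using Z by auto
  with j show ?thesis
    by (intro det_identical_columns[of _ n j "Suc j"])
      (auto simp: col_shift_mat_def col_def intro!: eq_vecI)
qed

lemma sum_det_col_shift:
  fixes A :: "'a :: comm_ring_1 mat"
  assumes "k \<le> n"
  shows "(\<Sum>Z \<in> {Z. Z \<subseteq> {0..<n} \<and> card Z = k}. det (col_shift_mat A n Z))
    = det (col_shift_mat A n {0..<k})"
proof -
  have "(\<Sum>Z \<in> {Z. Z \<subseteq> {0..<n} \<and> card Z = k}. det (col_shift_mat A n Z))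
      = (\<Sum>Z \<in> {{0..<k}}. det (col_shift_mat A n Z))"
    by (rule sum.mono_neutral_right) (auto simp: assms intro: det_col_shift_non_initial)
  then show ?thesis by simp
qed

lemma mixed_mat_eq_row_shift_mat:
  assumes "A \<in> carrier_mat n (n + 1)"
  shows "mixed_mat A I = row_shift_mat A n I"
  using assms by (auto simp: mixed_mat_def del_col_def row_shift_mat_def)

lemma del_col_eq_col_shift_mat:
  assumes "A \<in> carrier_mat n (n + 1)" and "k \<le> n"
  shows "del_col A (k + 1) = col_shift_mat A n {0..<k}"
  using assms by (auto simp: col_shift_mat_def del_col_def)

theorem mainTheorem5:
  fixes A :: "'a :: comm_ring_1 mat" and n l :: nat
  assumes "A \<in> carrier_mat n (n + 1)"
    and "1 \<le> l" and "l \<le> n + 1"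
  shows "det (del_col A l) = (\<Sum>I \<in> {I. I \<subseteq> {0..<n} \<and> card I = l - 1}. det (mixed_mat A I))"
proof -
  obtain k where l: "l = k + 1" and "k \<le> n"
    using assms(2,3) by (intro that[of "l - 1"]) auto
  have "det (del_col A l) = det (col_shift_mat A n {0..<k})"
    unfolding l using assms(1) \<open>k \<le> n\<close> by (rule arg_cong[OF del_col_eq_col_shift_mat])
  also have "\<dots> = (\<Sum>Z \<in> {Z. Z \<subseteq> {0..<n} \<and> card Z = k}. det (col_shift_mat A n Z))"
    using \<open>k \<le> n\<close> by (rule sum_det_col_shift[symmetric])
  also have "\<dots> = (\<Sum>I \<in> {I. I \<subseteq> {0..<n} \<and> card I = k}. det (row_shift_mat A n I))"
    by (rule sum_det_row_shift_eq_sum_det_col_shift[symmetric])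
  also have "\<dots> = (\<Sum>I \<in> {I. I \<subseteq> {0..<n} \<and> card I = k}. det (mixed_mat A I))"
    using mixed_mat_eq_row_shift_mat[OF assms(1)] by simp
  finally show ?thesis unfolding l by simp
qed

end
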